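(* The Eigenvector Method violates invariance to $\alpha$-transformation on a triad: there exist $n$ (indeed $n=4$) and pairwise comparison matrices $\mathbf{A},\hat{\mathbf{A}}\in\mathcal{A}^{n\times n}$ such that $\hat{\mathbf{A}}$ is obtained from $\mathbf{A}$ by an $\alpha$-transformation on a triad but the Eigenvector Method weight vectors of $\mathbf{A}$ and $\hat{\mathbf{A}}$ differ.
   Context: A pairwise comparison matrix of size $n$ is a matrix $\mathbf{A} = [a_{i,j}]$ with positive entries and $a_{j,i} = 1/a_{i,j}$ for all $i,j$; $\mathcal{A}^{n\times n}$ denotes the set of these. The Eigenvector Method assigns to $\mathbf{A}$ the vector $\mathbf{w}$ with positive entries, $\sum_i w_i = 1$, and $\mathbf{A}\mathbf{w} = \lambda_{\max}\mathbf{w}$, where $\lambda_{\max}$ is the Perron (maximal) eigenvalue of $\mathbf{A}$. An $\alpha$-transformation on the triad $(i,j,k)$ (three distinct indices), with $\alpha>0$, maps $\mathbf{A}$ to $\hat{\mathbf{A}}$ with $\hat a_{i,j} = \alpha a_{i,j}$, $\hat a_{j,i} = a_{j,i}/\alpha$, $\hat a_{j,k} = \alpha a_{j,k}$, $\hat a_{k,j} = a_{k,j}/\alpha$, $\hat a_{k,i} = \alpha a_{k,i}$, $\hat a_{i,k} = a_{i,k}/\alpha$, all other entries unchanged. *)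

theory Defs
  imports "HOL-Analysis.Analysis"
begin

text \<open>Square matrices of size n are represented as functions nat => nat => real,
  with indices ranging over {0..<n}; entries outside this range are irrelevant.\<close>

definition mat_vec :: "nat \<Rightarrow> (nat \<Rightarrow> nat \<Rightarrow> real) \<Rightarrow> (nat \<Rightarrow> real) \<Rightarrow> nat \<Rightarrow> real" where
  "mat_vec n A w i = (\<Sum>j<n. A i j * w j)"

definition is_PCM :: "nat \<Rightarrow> (nat \<Rightarrow> nat \<Rightarrow> real) \<Rightarrow> bool" where
  "is_PCM n A \<longleftrightarrow> (\<forall>i<n. \<forall>j<n. A i j > 0 \<and> A j i = 1 / A i j)"

definition is_eigenvalue :: "nat \<Rightarrow> (nat \<Rightarrow> nat \<Rightarrow> real) \<Rightarrow> real \<Rightarrow> bool" where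
  "is_eigenvalue n A l \<longleftrightarrow>
     (\<exists>v. (\<exists>i<n. v i \<noteq> 0) \<and> (\<forall>i<n. mat_vec n A v i = l * v i))"

definition lambda_max :: "nat \<Rightarrow> (nat \<Rightarrow> nat \<Rightarrow> real) \<Rightarrow> real" where
  "lambda_max n A = (GREATEST l. is_eigenvalue n A l)"

text \<open>Eigenvector Method: the positive, sum-normalised Perron eigenvector,
  as a vector on {0..<n} (set to 0 outside the index range for uniqueness).\<close>
definition EM :: "nat \<Rightarrow> (nat \<Rightarrow> nat \<Rightarrow> real) \<Rightarrow> (nat \<Rightarrow> real)" where
  "EM n A = (THE w. (\<forall>i<n. w i > 0) \<and> (\<forall>i. i \<ge> n \<longrightarrow> w i = 0) \<and>
                    (\<Sum>i<n. w i) = 1 \<and>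
                    (\<forall>i<n. mat_vec n A w i = lambda_max n A * w i))"

definition alpha_transform ::
  "real \<Rightarrow> nat \<Rightarrow> nat \<Rightarrow> nat \<Rightarrow> (nat \<Rightarrow> nat \<Rightarrow> real) \<Rightarrow> (nat \<Rightarrow> nat \<Rightarrow> real)" where
  "alpha_transform \<alpha> i j k A = (\<lambda>p q.
     if (p, q) = (i, j) \<or> (p, q) = (j, k) \<or> (p, q) = (k, i) then \<alpha> * A p q
     else if (p, q) = (j, i) \<or> (p, q) = (k, j) \<or> (p, q) = (i, k) then A p q / \<alpha>
     else A p q)"

end

theory Submission
  imports Defs
begin

text \<open>The all-ones matrix is consistent, so its Perron vector is uniform. Applying
  \<open>\<alpha> = 2\<close> to the triad \<open>(0,1,2)\<close> of the \<open>4 \<times> 4\<close> all-ones matrix keeps the upper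
  \<open>3 \<times> 3\<close> block circulant, so every eigenvector is still constant on the triad; the
  fourth entry is then forced to be \<open>\<lambda> - 7/2\<close> times the common value, where
  \<open>\<lambda> = (9 + sqrt 73) / 4\<close> is the Perron root. As \<open>\<lambda> \<noteq> 9/2\<close>, the weights are no longer
  uniform.\<close>

definition is_EM_vector :: "nat \<Rightarrow> (nat \<Rightarrow> nat \<Rightarrow> real) \<Rightarrow> (nat \<Rightarrow> real) \<Rightarrow> bool" where
  "is_EM_vector n A w \<longleftrightarrow> (\<forall>i<n. w i > 0) \<and> (\<forall>i. i \<ge> n \<longrightarrow> w i = 0) \<and>
     (\<Sum>i<n. w i) = 1 \<and> (\<forall>i<n. mat_vec n A w i = lambda_max n A * w i)"

lemma EM_eqI:
  assumes "is_EM_vector n A w" and "\<And>v. is_EM_vector n A v \<Longrightarrow> v = w"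
  shows "EM n A = w"
proof -
  have "EM n A = (THE w. is_EM_vector n A w)"
    by (simp add: EM_def is_EM_vector_def)
  also have "\<dots> = w"
    using assms by (rule the_equality)
  finally show ?thesis .
qed

lemma lambda_max_eqI:
  assumes "is_eigenvalue n A l" and "\<And>m. is_eigenvalue n A m \<Longrightarrow> m \<le> l"
  shows "lambda_max n A = l"
  unfolding lambda_max_def using assms by (rule Greatest_equality)

lemma alpha_transform_eq:
  "alpha_transform \<alpha> i j k A p q =
     (if (p, q) \<in> {(i, j), (j, k), (k, i)} then \<alpha> * A p q
      else if (q, p) \<in> {(i, j), (j, k), (k, i)} then A p q / \<alpha> else A p q)"
  unfolding alpha_transform_def by auto

lemma is_PCM_alpha_transform:
  assumes "is_PCM n A" "\<alpha> > 0" "i \<noteq> j" "j \<noteq> k" "i \<noteq> k"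
  shows "is_PCM n (alpha_transform \<alpha> i j k A)"
  unfolding is_PCM_def
proof (intro allI impI conjI)
  fix p q assume "p < n" "q < n"
  then have pos: "A p q > 0" and recip: "A q p = 1 / A p q"
    using assms(1) unfolding is_PCM_def by blast+
  show "alpha_transform \<alpha> i j k A p q > 0"
    using pos assms(2) unfolding alpha_transform_eq by simp
  let ?T = "{(i, j), (j, k), (k, i)}"
  have "(p, q) \<notin> ?T \<or> (q, p) \<notin> ?T"
    using assms(3-5) by blast
  then show "alpha_transform \<alpha> i j k A q p = 1 / alpha_transform \<alpha> i j k A p q"
    unfolding alpha_transform_eq recip using assms(2) pos
    by (auto simp del: insert_iff)
qed

definition ones :: "nat \<Rightarrow> nat \<Rightarrow> real" where
  "ones = (\<lambda>_ _. 1)"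

lemma mat_vec_ones: "mat_vec n ones v i = (\<Sum>j<n. v j)"
  by (simp add: mat_vec_def ones_def)

lemma is_PCM_ones: "is_PCM n ones"
  by (simp add: is_PCM_def ones_def)

lemma is_eigenvalue_ones_cases:
  assumes "is_eigenvalue n ones l"
  shows "l = 0 \<or> l = real n"
proof -
  obtain v i0 where "i0 < n" "v i0 \<noteq> 0" and eig: "\<And>i. i < n \<Longrightarrow> l * v i = (\<Sum>j<n. v j)"
    using assms by (fastforce simp: is_eigenvalue_def mat_vec_ones)
  define S where "S = (\<Sum>j<n. v j)"
  have "real n * S = (\<Sum>i<n. l * v i)"
    using eig by (simp add: S_def)
  also have "\<dots> = l * S"
    by (simp add: S_def sum_distrib_left)
  finally have nS: "real n * S = l * S" .
  show ?thesis
  proof (cases "S = 0")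
    case True
    with eig[OF \<open>i0 < n\<close>] have "l * v i0 = 0" by (simp add: S_def)
    with \<open>v i0 \<noteq> 0\<close> show ?thesis by simp
  next
    case False
    with nS show ?thesis by simp
  qed
qed

lemma lambda_max_ones:
  assumes "n > 0"
  shows "lambda_max n ones = real n"
proof (rule lambda_max_eqI)
  show "is_eigenvalue n ones (real n)"
    unfolding is_eigenvalue_def mat_vec_ones using assms
    by (intro exI[of _ "\<lambda>_. 1"]) auto
qed (auto dest: is_eigenvalue_ones_cases)

lemma EM_ones:
  assumes "n > 0"
  shows "EM n ones = (\<lambda>i. if i < n then 1 / real n else 0)"
proof (rule EM_eqI)
  show "is_EM_vector n ones (\<lambda>i. if i < n then 1 / real n else 0)"
    using assms by (simp add: is_EM_vector_def lambda_max_ones mat_vec_ones)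
next
  fix v
  assume v: "is_EM_vector n ones v"
  then have "(\<Sum>j<n. v j) = 1" and "\<And>i. i < n \<Longrightarrow> (\<Sum>j<n. v j) = real n * v i"
    unfolding is_EM_vector_def lambda_max_ones[OF assms] mat_vec_ones by blast+
  with v show "v = (\<lambda>i. if i < n then 1 / real n else 0)"
    by (auto simp: is_EM_vector_def field_simps)
qed

lemma sum_lessThan_4:
  fixes f :: "nat \<Rightarrow> real"
  shows "(\<Sum>j<4. f j) = f 0 + f 1 + f 2 + f 3"
  by (simp add: eval_nat_numeral)

lemma all_less_4: "(\<forall>i<(4::nat). P i) \<longleftrightarrow> P 0 \<and> P 1 \<and> P 2 \<and> P 3"
  by (auto simp: eval_nat_numeral less_Suc_eq)

lemma ex_less_4: "(\<exists>i<(4::nat). P i) \<longleftrightarrow> P 0 \<or> P 1 \<or> P 2 \<or> P 3"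
  by (auto simp: eval_nat_numeral less_Suc_eq)

definition ones_tilted :: "nat \<Rightarrow> nat \<Rightarrow> real" where
  "ones_tilted = alpha_transform 2 0 1 2 ones"

lemma mat_vec_ones_tilted:
  "mat_vec 4 ones_tilted v 0 = v 0 + 2 * v 1 + v 2 / 2 + v 3"
  "mat_vec 4 ones_tilted v 1 = v 0 / 2 + v 1 + 2 * v 2 + v 3"
  "mat_vec 4 ones_tilted v 2 = 2 * v 0 + v 1 / 2 + v 2 + v 3"
  "mat_vec 4 ones_tilted v 3 = v 0 + v 1 + v 2 + v 3"
  by (simp_all add: mat_vec_def ones_tilted_def ones_def alpha_transform_def sum_lessThan_4)

lemma eigenvector_ones_tilted_triad_const:
  fixes v :: "nat \<Rightarrow> real"
  assumes "v 0 + 2 * v 1 + v 2 / 2 + v 3 = l * v 0"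
    and "v 0 / 2 + v 1 + 2 * v 2 + v 3 = l * v 1"
    and "2 * v 0 + v 1 / 2 + v 2 + v 3 = l * v 2"
  shows "v 1 = v 0" "v 2 = v 0"
proof -
  define d0 where "d0 = v 0 - v 1"
  define d1 where "d1 = v 1 - v 2"
  have e0: "d0 / 2 + 3/2 * d1 = l * d0"
    using assms unfolding d0_def d1_def by (simp add: field_simps)
  have e1: "- 3/2 * d0 - d1 = l * d1"
    using assms unfolding d0_def d1_def by (simp add: field_simps)
  \<comment> \<open>The differences obey a \<open>2 \<times> 2\<close> system without real eigenvalues;
     cross-multiplying eliminates \<open>l\<close> and leaves a positive definite form.\<close>
  have "3/2 * (d0\<^sup>2 + d0 * d1 + d1\<^sup>2) = d1 * (d0 / 2 + 3/2 * d1) - d0 * (- 3/2 * d0 - d1)"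
    by (simp add: field_simps power2_eq_square)
  also have "\<dots> = d1 * (l * d0) - d0 * (l * d1)"
    unfolding e0 e1 ..
  finally have "d0\<^sup>2 + d0 * d1 + d1\<^sup>2 = 0"
    by simp
  moreover have "(2 * d0 + d1)\<^sup>2 + 3 * d1\<^sup>2 = 4 * (d0\<^sup>2 + d0 * d1 + d1\<^sup>2)"
    by (simp add: power2_eq_square algebra_simps)
  ultimately have "(2 * d0 + d1)\<^sup>2 + 3 * d1\<^sup>2 = 0"
    by simp
  then have "d1\<^sup>2 = 0" "(2 * d0 + d1)\<^sup>2 = 0"
    using zero_le_power2[of d1] zero_le_power2[of "2 * d0 + d1"] by linarith+
  then have "d0 = 0" "d1 = 0"
    by simp_all
  then show "v 1 = v 0" "v 2 = v 0"
    unfolding d0_def d1_def by simp_all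
qed

lemma eigenvalue_ones_tilted_root:
  assumes "is_eigenvalue 4 ones_tilted l"
  shows "l\<^sup>2 - 9/2 * l + 1/2 = 0"
proof -
  obtain v :: "nat \<Rightarrow> real" where nz: "v 0 \<noteq> 0 \<or> v 1 \<noteq> 0 \<or> v 2 \<noteq> 0 \<or> v 3 \<noteq> 0"
    and e: "v 0 + 2 * v 1 + v 2 / 2 + v 3 = l * v 0"
      "v 0 / 2 + v 1 + 2 * v 2 + v 3 = l * v 1"
      "2 * v 0 + v 1 / 2 + v 2 + v 3 = l * v 2"
      "v 0 + v 1 + v 2 + v 3 = l * v 3"
    using assms unfolding is_eigenvalue_def ex_less_4 all_less_4 mat_vec_ones_tilted by blast
  note triad = eigenvector_ones_tilted_triad_const[OF e(1-3)]
  have v3: "v 3 = (l - 7/2) * v 0"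
    using e(1) triad by (simp add: algebra_simps)
  have "3 * v 0 = (l - 1) * v 3"
    using e(4) triad by (simp add: algebra_simps)
  then have "3 * v 0 = (l - 1) * ((l - 7/2) * v 0)"
    by (simp only: v3)
  moreover have "(l\<^sup>2 - 9/2 * l + 1/2) * v 0 = (l - 1) * ((l - 7/2) * v 0) - 3 * v 0"
    by (simp add: power2_eq_square field_simps)
  ultimately have "(l\<^sup>2 - 9/2 * l + 1/2) * v 0 = 0"
    by simp
  moreover have "v 0 \<noteq> 0"
    using nz triad v3 by auto
  ultimately show ?thesis by simp
qed

definition perron_root_tilted :: real where
  "perron_root_tilted = (9 + sqrt 73) / 4"

lemma perron_root_tilted_root: "perron_root_tilted\<^sup>2 - 9/2 * perron_root_tilted + 1/2 = 0"
  by (simp add: perron_root_tilted_def power2_eq_square field_simps)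

lemma perron_root_tilted_gt: "perron_root_tilted > 7/2"
proof -
  have "sqrt 73 > 5"
    by (rule real_less_rsqrt) simp
  then show ?thesis
    unfolding perron_root_tilted_def by simp
qed

lemma lambda_max_ones_tilted: "lambda_max 4 ones_tilted = perron_root_tilted" (is "_ = ?r")
proof (rule lambda_max_eqI)
  show "is_eigenvalue 4 ones_tilted ?r"
    unfolding is_eigenvalue_def ex_less_4 all_less_4 mat_vec_ones_tilted
    using perron_root_tilted_root
    by (intro exI[of _ "\<lambda>i. if i = 3 then ?r - 7/2 else 1"]) (simp add: power2_eq_square field_simps)
next
  fix m
  assume "is_eigenvalue 4 ones_tilted m"
  then have "m\<^sup>2 - 9/2 * m + 1/2 = 0"
    by (rule eigenvalue_ones_tilted_root)
  moreover have "(m - ?r) * (m - (9/2 - ?r)) = (m\<^sup>2 - 9/2 * m + 1/2) - (?r\<^sup>2 - 9/2 * ?r + 1/2)"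
    by (simp add: power2_eq_square field_simps)
  ultimately have "(m - ?r) * (m - (9/2 - ?r)) = 0"
    using perron_root_tilted_root by simp
  then show "m \<le> ?r"
    using perron_root_tilted_gt by auto
qed

lemma EM_ones_tilted_not_uniform: "EM 4 ones_tilted 3 \<noteq> EM 4 ones_tilted 0"
proof -
  let ?r = perron_root_tilted
  define a where "a = 1 / (?r - 1/2)"
  define u :: "nat \<Rightarrow> real"
    where "u = (\<lambda>i. if i < 3 then a else if i = 3 then (?r - 7/2) * a else 0)"
  have a_pos: "a > 0" and norm: "(?r - 1/2) * a = 1"
    unfolding a_def using perron_root_tilted_gt by simp_all
  have "EM 4 ones_tilted = u"
  proof (rule EM_eqI)
    have "?r * ((?r - 7/2) * a) - (3 * a + (?r - 7/2) * a) = (?r\<^sup>2 - 9/2 * ?r + 1/2) * a"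
      by (simp add: power2_eq_square field_simps)
    then have "3 * a + (?r - 7/2) * a = ?r * ((?r - 7/2) * a)"
      using perron_root_tilted_root by simp
    moreover have "(?r - 7/2) * a > 0"
      using a_pos perron_root_tilted_gt by simp
    ultimately show "is_EM_vector 4 ones_tilted u"
      unfolding is_EM_vector_def all_less_4 mat_vec_ones_tilted sum_lessThan_4 u_def
        lambda_max_ones_tilted
      using a_pos norm by (simp add: field_simps)
  next
    fix w
    assume w: "is_EM_vector 4 ones_tilted w"
    then have e: "w 0 + w 1 + w 2 + w 3 = 1"
      "w 0 + 2 * w 1 + w 2 / 2 + w 3 = ?r * w 0"
      "w 0 / 2 + w 1 + 2 * w 2 + w 3 = ?r * w 1"
      "2 * w 0 + w 1 / 2 + w 2 + w 3 = ?r * w 2"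
      unfolding is_EM_vector_def all_less_4 mat_vec_ones_tilted sum_lessThan_4
        lambda_max_ones_tilted by auto
    note triad = eigenvector_ones_tilted_triad_const[OF e(2-4)]
    have w3: "w 3 = (?r - 7/2) * w 0"
      using e(2) triad by (simp add: algebra_simps)
    have "(?r - 1/2) * w 0 = 1"
      using e(1) triad w3 by (simp add: algebra_simps)
    then have w0: "w 0 = a"
      unfolding a_def using perron_root_tilted_gt by (simp add: field_simps)
    have "w i = u i" for i
    proof -
      consider "i = 0" | "i = 1" | "i = 2" | "i = 3" | "i \<ge> 4" by linarith
      then show ?thesis
        using w triad w3 w0 by cases (auto simp: u_def is_EM_vector_def)
    qed
    then show "w = u" ..
  qed
  moreover have "?r \<noteq> 9/2"
  proof
    assume r: "?r = 9/2"
    show False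
      using perron_root_tilted_root unfolding r by (simp add: power2_eq_square)
  qed
  ultimately show ?thesis
    using a_pos by (simp add: u_def)
qed

theorem proposition3p2:
  shows "\<exists>n A A' \<alpha> i j k.
           n = 4 \<and> is_PCM n A \<and> is_PCM n A' \<and>
           \<alpha> > 0 \<and> i < n \<and> j < n \<and> k < n \<and> i \<noteq> j \<and> j \<noteq> k \<and> i \<noteq> k \<and>
           A' = alpha_transform \<alpha> i j k A \<and>
           EM n A \<noteq> EM n A'"
proof -
  have pcm: "is_PCM 4 ones_tilted"
    unfolding ones_tilted_def by (rule is_PCM_alpha_transform[OF is_PCM_ones]) simp_all
  have "EM 4 ones 3 = EM 4 ones 0"
    by (simp add: EM_ones)
  with EM_ones_tilted_not_uniform have "EM 4 ones \<noteq> EM 4 ones_tilted"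
    by metis
  with pcm is_PCM_ones show ?thesis
    unfolding ones_tilted_def by (intro exI conjI) auto
qed

end
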